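(* Let $X$ be an infinite set and $\{X_0,\dots,X_n\}$ a partition of $X$. Let $(x_k)_{k\in\omega}$ and $(y_k)_{k\in\omega}$ be sequences in the Boolean group $[X]^{<\omega}$ such that the family $\{x_k:k\in\omega\}\cup\{y_k:k\in\omega\}$ (indexed by $k$ and by which sequence it comes from) is linearly independent, and such that for every $p\in\{0,\dots,n\}$ both families $\{x_k\cap X_p:k\in\omega\}$ and $\{y_k\cap X_p:k\in\omega\}$ are linearly independent. Then there exist a strictly increasing sequence $(k_m)_{m\in\omega}$ in $\omega$ and $n_0\in\{0,\dots,n\}$ such that the family $\{x_{k_m}\cap X_{n_0}:m\in\omega\}\cup\{y_{k_m}\cap X_{n_0}:m\in\omega\}$ is linearly independent.
   Context: For a set $X$, $[X]^{<\omega}$ denotes the set of finite subsets of $X$, regarded as a Boolean group (a vector space over the two-element field $2=\{0,1\}$) with symmetric difference $\triangle$ as operation and $\emptyset$ as neutral element. Linear independence is over the field $2$; a linearly independent indexed family has pairwise distinct members. *)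

theory Defs
  imports Main
begin

text \<open>Sum in the Boolean group of finite sets (operation: symmetric difference)
  of the members of an indexed family over a finite index set F:
  a point belongs to the sum iff it lies in an odd number of the summands.\<close>
definition bsum :: "('i \<Rightarrow> 'a set) \<Rightarrow> 'i set \<Rightarrow> 'a set" where
  "bsum f F = {a. odd (card {i \<in> F. a \<in> f i})}"

definition lin_indep :: "('i \<Rightarrow> 'a set) \<Rightarrow> bool" where
  "lin_indep f \<longleftrightarrow> (\<forall>F. finite F \<and> F \<noteq> {} \<longrightarrow> bsum f F \<noteq> {})"

definition join_fam :: "(nat \<Rightarrow> 'a set) \<Rightarrow> (nat \<Rightarrow> 'a set) \<Rightarrow> nat + nat \<Rightarrow> 'a set" where
  "join_fam x y s = (case s of Inl k \<Rightarrow> x k | Inr k \<Rightarrow> y k)"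

end

theory Submission
  imports Defs "HOL-Library.Infinite_Set"
begin

text \<open>Since the symmetric differences of \<open>x\<^sub>k\<close> and \<open>y\<^sub>k\<close> form an injective sequence of finite
  sets, their union is infinite, so one cell \<open>X\<^sub>p\<close> of the partition meets it in an infinite set.
  In that cell pass to a subsequence along which every new term escapes the union of all earlier
  ones three times over: \<open>x\<^sub>k \<inter> X\<^sub>p\<close>, \<open>y\<^sub>k \<inter> X\<^sub>p\<close> and their symmetric difference each have a point
  outside it. Then in any nonempty finite sum the terms of largest index contribute a point that
  no other summand can cancel.\<close>

lemma bsum_Un_disjoint:
  assumes "finite A" "finite B" "A \<inter> B = {}"
  shows "bsum f (A \<union> B) = sym_diff (bsum f A) (bsum f B)"
proof -
  have "card {i \<in> A \<union> B. a \<in> f i} = card {i \<in> A. a \<in> f i} + card {i \<in> B. a \<in> f i}" for a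
    using assms by (subst card_Un_disjoint[symmetric]) (auto intro: arg_cong[where f = card])
  then show ?thesis
    unfolding bsum_def by auto
qed

lemma bsum_singleton [simp]: "bsum f {s} = f s"
proof -
  have "{i \<in> {s}. a \<in> f i} = (if a \<in> f s then {s} else {})" for a
    by auto
  then show ?thesis
    unfolding bsum_def by simp
qed

lemma bsum_doubleton:
  assumes "s \<noteq> t"
  shows "bsum f {s, t} = sym_diff (f s) (f t)"
  using bsum_Un_disjoint[of "{s}" "{t}" f] assms by (simp add: insert_commute)

lemma bsum_subset_UN: "bsum f F \<subseteq> (\<Union>i\<in>F. f i)"
proof
  fix a
  assume "a \<in> bsum f F"
  then have "{i \<in> F. a \<in> f i} \<noteq> {}"
    unfolding bsum_def by (metis (no_types, lifting) card.empty even_zero mem_Collect_eq)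
  then show "a \<in> (\<Union>i\<in>F. f i)"
    by blast
qed

lemma lin_indepD: "lin_indep f \<Longrightarrow> finite F \<Longrightarrow> F \<noteq> {} \<Longrightarrow> bsum f F \<noteq> {}"
  unfolding lin_indep_def by simp

lemma lin_indep_imp_inj:
  assumes "lin_indep f"
  shows "inj f"
proof (rule injI, rule ccontr)
  fix i j
  assume "f i = f j" "i \<noteq> j"
  then have "bsum f {i, j} = {}"
    by (simp add: bsum_doubleton)
  with assms show False
    using lin_indepD[of f "{i, j}"] by simp
qed

lemma lin_indep_join_fam_imp_inj_sym_diff:
  assumes "lin_indep (join_fam x y)"
  shows "inj (\<lambda>k. sym_diff (x k) (y k))"
proof (rule injI, rule ccontr)
  fix i j
  assume eq: "sym_diff (x i) (y i) = sym_diff (x j) (y j)" and "i \<noteq> j"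
  have "bsum (join_fam x y) ({Inl i, Inr i} \<union> {Inl j, Inr j}) =
      sym_diff (bsum (join_fam x y) {Inl i, Inr i}) (bsum (join_fam x y) {Inl j, Inr j})"
    by (rule bsum_Un_disjoint) (use \<open>i \<noteq> j\<close> in auto)
  also have "\<dots> = {}"
    using eq by (simp add: bsum_doubleton join_fam_def)
  finally show False
    using lin_indepD[OF assms, of "{Inl i, Inr i} \<union> {Inl j, Inr j}"] by simp
qed

lemma finite_subset_preimage_inj:
  assumes "inj u" "finite S"
  shows "finite {k. u k \<subseteq> S}"
  using finite_vimageI[of "Pow S" u] assms by (simp add: vimage_def)

lemma infinite_not_subset_of_finite:
  assumes "infinite (\<Union>k. z k)" "\<And>k. finite (z k)" "finite S"
  shows "infinite {k. \<not> z k \<subseteq> S}"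
proof
  assume "finite {k. \<not> z k \<subseteq> S}"
  with assms(2,3) have "finite (S \<union> (\<Union>k\<in>{k. \<not> z k \<subseteq> S}. z k))"
    by blast
  moreover have "(\<Union>k. z k) \<subseteq> S \<union> (\<Union>k\<in>{k. \<not> z k \<subseteq> S}. z k)"
    by blast
  ultimately show False
    using assms(1) finite_subset by blast
qed

text \<open>The state carried through the recursive choice is the last index chosen together with the
  union of the sets chosen so far.\<close>

lemma greedy_subsequence:
  fixes w :: "nat \<Rightarrow> 'a set" and Q :: "nat \<Rightarrow> 'a set \<Rightarrow> bool"
  assumes "\<And>k. finite (w k)" and "\<And>S. finite S \<Longrightarrow> infinite {k. Q k S}"
  shows "\<exists>km :: nat \<Rightarrow> nat. strict_mono km \<and> (\<forall>m. Q (km m) (\<Union>i<m. w (km i)))"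
proof -
  have "\<exists>f. \<forall>m. (finite (snd (f m)) \<and> (m = 0 \<longrightarrow> snd (f m) = {}))
    \<and> fst (f m) < fst (f (Suc m)) \<and> Q (fst (f (Suc m))) (snd (f m))
    \<and> snd (f (Suc m)) = snd (f m) \<union> w (fst (f (Suc m)))"
  proof (rule dependent_nat_choice[where P = "\<lambda>m p. finite (snd p) \<and> (m = 0 \<longrightarrow> snd p = {})"])
    fix p :: "nat \<times> 'a set" and m :: nat
    assume "finite (snd p) \<and> (m = 0 \<longrightarrow> snd p = {})"
    then obtain k where "k > fst p" "Q k (snd p)"
      using assms(2) unfolding infinite_nat_iff_unbounded by blast
    then show "\<exists>p'. (finite (snd p') \<and> (Suc m = 0 \<longrightarrow> snd p' = {}))
        \<and> fst p < fst p' \<and> Q (fst p') (snd p) \<and> snd p' = snd p \<union> w (fst p')"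
      using assms(1) \<open>finite (snd p) \<and> _\<close> by (intro exI[of _ "(k, snd p \<union> w k)"]) auto
  qed (rule exI[of _ "(0, {})"], simp)
  then obtain f where f: "snd (f 0) = {}"
    "\<And>m. fst (f m) < fst (f (Suc m)) \<and> Q (fst (f (Suc m))) (snd (f m))
       \<and> snd (f (Suc m)) = snd (f m) \<union> w (fst (f (Suc m)))"
    by blast
  define km where "km m = fst (f (Suc m))" for m
  have unions: "snd (f m) = (\<Union>i<m. w (km i))" for m
    by (induction m) (use f in \<open>auto simp: km_def lessThan_Suc\<close>)
  have "strict_mono km"
    unfolding strict_mono_Suc_iff km_def using f(2) by blast
  moreover have "Q (km m) (\<Union>i<m. w (km i))" for m
    using f(2)[of m] unions[of m] by (simp add: km_def)
  ultimately show ?thesis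
    by blast
qed

lemma lin_indep_join_fam_if_escaping:
  fixes u v :: "nat \<Rightarrow> 'a set"
  defines "R M \<equiv> (\<Union>i<M. u i \<union> v i)"
  assumes "\<And>M. \<not> u M \<subseteq> R M" "\<And>M. \<not> v M \<subseteq> R M" "\<And>M. \<not> sym_diff (u M) (v M) \<subseteq> R M"
  shows "lin_indep (join_fam u v)"
  unfolding lin_indep_def
proof (intro allI impI)
  fix F :: "(nat + nat) set"
  assume F: "finite F \<and> F \<noteq> {}"
  define idx :: "nat + nat \<Rightarrow> nat" where "idx s = (case s of Inl i \<Rightarrow> i | Inr i \<Rightarrow> i)" for s
  define M where "M = Max (idx ` F)"
  define T where "T = F \<inter> {Inl M, Inr M}"
  define G where "G = F - {Inl M, Inr M}"
  have "M \<in> idx ` F"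
    unfolding M_def using F by simp
  then have "T = {Inl M} \<or> T = {Inr M} \<or> T = {Inl M, Inr M}"
    unfolding T_def idx_def by (auto split: sum.splits)
  then have "bsum (join_fam u v) T \<in> {u M, v M, sym_diff (u M) (v M)}"
    by (auto simp: bsum_doubleton join_fam_def)
  with assms(2-4) obtain a where a: "a \<in> bsum (join_fam u v) T" "a \<notin> R M"
    by blast
  have "idx s < M" if "s \<in> G" for s
  proof -
    have "idx s \<le> M"
      using F that unfolding G_def M_def by simp
    moreover have "idx s \<noteq> M"
      using that unfolding G_def idx_def by (cases s) auto
    ultimately show ?thesis
      by simp
  qed
  moreover have "join_fam u v s \<subseteq> u (idx s) \<union> v (idx s)" for s
    by (cases s) (auto simp: join_fam_def idx_def)
  ultimately have "join_fam u v s \<subseteq> R M" if "s \<in> G" for s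
    using that unfolding R_def by blast
  then have "bsum (join_fam u v) G \<subseteq> R M"
    using bsum_subset_UN[of "join_fam u v" G] by blast
  moreover have "F = T \<union> G" "T \<inter> G = {}" "finite T" "finite G"
    using F unfolding T_def G_def by auto
  then have "bsum (join_fam u v) F = sym_diff (bsum (join_fam u v) T) (bsum (join_fam u v) G)"
    using bsum_Un_disjoint by metis
  ultimately show "bsum (join_fam u v) F \<noteq> {}"
    using a by blast
qed

lemma lin_indep_subsequence:
  fixes u v :: "nat \<Rightarrow> 'a set"
  assumes "inj u" "inj v" "\<And>k. finite (u k)" "\<And>k. finite (v k)"
    and "infinite (\<Union>k. sym_diff (u k) (v k))"
  shows "\<exists>km. strict_mono km \<and> lin_indep (join_fam (\<lambda>m. u (km m)) (\<lambda>m. v (km m)))"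
proof -
  define escapes where
    "escapes k S \<longleftrightarrow> \<not> u k \<subseteq> S \<and> \<not> v k \<subseteq> S \<and> \<not> sym_diff (u k) (v k) \<subseteq> S" for k S
  have "infinite {k. escapes k S}" if "finite S" for S
  proof -
    have "{k. \<not> sym_diff (u k) (v k) \<subseteq> S} \<subseteq> {k. escapes k S} \<union> {k. u k \<subseteq> S} \<union> {k. v k \<subseteq> S}"
      unfolding escapes_def by blast
    moreover have "infinite {k. \<not> sym_diff (u k) (v k) \<subseteq> S}"
      using infinite_not_subset_of_finite[OF assms(5) _ that] assms(3,4) by blast
    ultimately show ?thesis
      using finite_subset_preimage_inj[OF assms(1) that] finite_subset_preimage_inj[OF assms(2) that]
      by (meson finite_UnI finite_subset)
  qed
  moreover have "finite (u k \<union> v k)" for k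
    using assms(3,4) by blast
  ultimately obtain km :: "nat \<Rightarrow> nat" where "strict_mono km" and
    km: "\<And>m. escapes (km m) (\<Union>i<m. u (km i) \<union> v (km i))"
    using greedy_subsequence[of "\<lambda>k. u k \<union> v k" escapes] by blast
  moreover have "lin_indep (join_fam (\<lambda>m. u (km m)) (\<lambda>m. v (km m)))"
    by (rule lin_indep_join_fam_if_escaping) (use km[unfolded escapes_def] in blast)+
  ultimately show ?thesis
    by blast
qed

theorem mainTheorem2:
  fixes X :: "'a set" and P :: "nat \<Rightarrow> 'a set" and n :: nat
    and x y :: "nat \<Rightarrow> 'a set"
  assumes "infinite X"
    and "\<And>p. p \<le> n \<Longrightarrow> P p \<noteq> {}"
    and "\<And>p q. p \<le> n \<Longrightarrow> q \<le> n \<Longrightarrow> p \<noteq> q \<Longrightarrow> P p \<inter> P q = {}"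
    and "(\<Union>p\<in>{0..n}. P p) = X"
    and "\<And>k. finite (x k) \<and> x k \<subseteq> X"
    and "\<And>k. finite (y k) \<and> y k \<subseteq> X"
    and "lin_indep (join_fam x y)"
    and "\<And>p. p \<le> n \<Longrightarrow> lin_indep (\<lambda>k. x k \<inter> P p) \<and> lin_indep (\<lambda>k. y k \<inter> P p)"
  shows "\<exists>km n0. strict_mono km \<and> n0 \<le> n \<and>
           lin_indep (join_fam (\<lambda>m. x (km m) \<inter> P n0) (\<lambda>m. y (km m) \<inter> P n0))"
proof -
  let ?z = "\<lambda>k. sym_diff (x k) (y k)"
  have "infinite (range ?z)"
    using lin_indep_join_fam_imp_inj_sym_diff[OF assms(7)] by (simp add: finite_image_iff)
  then have "infinite (\<Union>k. ?z k)"
    using finite_UnionD by blast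
  moreover have "(\<Union>k. ?z k) = (\<Union>p\<in>{0..n}. \<Union>k. ?z k \<inter> P p)"
    using assms(4-6) by blast
  ultimately have "infinite (\<Union>p\<in>{0..n}. \<Union>k. ?z k \<inter> P p)"
    by argo
  then obtain p where "p \<le> n" and "infinite (\<Union>k. ?z k \<inter> P p)"
    using finite_UN_I[of "{0..n}" "\<lambda>p. \<Union>k. ?z k \<inter> P p"] by auto
  moreover have "(\<Union>k. ?z k \<inter> P p) = (\<Union>k. sym_diff (x k \<inter> P p) (y k \<inter> P p))"
    by blast
  ultimately have "infinite (\<Union>k. sym_diff (x k \<inter> P p) (y k \<inter> P p))"
    by argo
  moreover have "inj (\<lambda>k. x k \<inter> P p)" "inj (\<lambda>k. y k \<inter> P p)"
    using assms(8)[OF \<open>p \<le> n\<close>] lin_indep_imp_inj by blast+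
  moreover have "finite (x k \<inter> P p)" "finite (y k \<inter> P p)" for k
    using assms(5,6) by blast+
  ultimately have "\<exists>km. strict_mono km \<and>
      lin_indep (join_fam (\<lambda>m. x (km m) \<inter> P p) (\<lambda>m. y (km m) \<inter> P p))"
    by (intro lin_indep_subsequence)
  with \<open>p \<le> n\<close> show ?thesis
    by blast
qed

end
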